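(* Let $T$ be a local, translation-invariant stochastic matrix on $\mathbb{Z}\times\{1,\dots,D\}$ with $\det X(k)\ne0$ for all $k\in[-\pi,\pi]$. Suppose there is a real orthogonal $D\times D$ matrix $M$ such that $$\sum_{b,c}M_{a,b}\,T_{j-l,b;j,c}\,M_{d,c}=T_{j+l,a;j,d}\quad\text{for all } l\in\mathbb{Z},\ j,\ a,\ d$$ (spatial inversion symmetry; equivalently $MX(-k)M^{\top}=X(k)$). Then $w(T,0)=0$.
   Context: States are pairs $(j,a)$, $j\in\mathbb{Z}$, $a\in\{1,\dots,D\}$. A stochastic matrix is a real matrix $T=(T_{i,a;j,b})$ with $T_{i,a;j,b}\ge0$ and $\sum_{i,a}T_{i,a;j,b}=1$ for all $(j,b)$. It is local if there are $C,\ell>0$ with $T_{i,a;j,b}\le Ce^{-|i-j|/\ell}$ for all sufficiently large $|i-j|$, and translation invariant if $T_{i+1,a;j+1,b}=T_{i,a;j,b}$. The Bloch matrix is $X(k)$ with $X_{a,b}(k)=\sum_{l\in\mathbb{Z}}T_{j+l,a;j,b}e^{-ikl}$, $k\in[-\pi,\pi]$, and $w(T,0)=\int_{-\pi}^{\pi}\frac{dk}{2\pi i}\partial_k\log\det X(k)\in\mathbb{Z}$. *)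

theory Defs
  imports "HOL-Analysis.Analysis"
begin

text \<open>States are pairs (j,a) with j an integer and a in a finite type 'd, so D = CARD('d).
  A matrix on Z x {1..D} is a function T i a j b = T_{i,a;j,b}.\<close>

definition stochastic :: "(int \<Rightarrow> 'd::finite \<Rightarrow> int \<Rightarrow> 'd \<Rightarrow> real) \<Rightarrow> bool" where
  "stochastic T \<longleftrightarrow> (\<forall>i a j b. 0 \<le> T i a j b) \<and>
     (\<forall>j b. ((\<lambda>(i, a). T i a j b) has_sum 1) UNIV)"

definition local_matrix :: "(int \<Rightarrow> 'd::finite \<Rightarrow> int \<Rightarrow> 'd \<Rightarrow> real) \<Rightarrow> bool" where
  "local_matrix T \<longleftrightarrow> (\<exists>C L N. C > 0 \<and> L > 0 \<and>
     (\<forall>i a j b. \<bar>i - j\<bar> \<ge> N \<longrightarrow> T i a j b \<le> C * exp (- real_of_int \<bar>i - j\<bar> / L)))"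

definition translation_invariant :: "(int \<Rightarrow> 'd::finite \<Rightarrow> int \<Rightarrow> 'd \<Rightarrow> real) \<Rightarrow> bool" where
  "translation_invariant T \<longleftrightarrow> (\<forall>i a j b. T (i + 1) a (j + 1) b = T i a j b)"

text \<open>Bloch matrix X(k)_{a,b} = sum over l of T_{j+l,a;j,b} e^{-ikl}; by translation
  invariance we take j = 0.\<close>
definition bloch :: "(int \<Rightarrow> 'd::finite \<Rightarrow> int \<Rightarrow> 'd \<Rightarrow> real) \<Rightarrow> real \<Rightarrow> complex ^ 'd ^ 'd" where
  "bloch T k = (\<chi> a b. \<Sum>\<^sub>\<infinity>l::int. complex_of_real (T l a 0 b) * exp (- \<i> * complex_of_real (k * real_of_int l)))"

text \<open>w(T,0) = (1/(2 pi i)) integral_{-pi}^{pi} d/dk log det X(k) dk, with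
  d/dk log det X(k) = (d/dk det X(k)) / det X(k).\<close>
definition wind :: "(int \<Rightarrow> 'd::finite \<Rightarrow> int \<Rightarrow> 'd \<Rightarrow> real) \<Rightarrow> complex" where
  "wind T = integral {-pi..pi}
      (\<lambda>k. vector_derivative (\<lambda>q. det (bloch T q)) (at k) / det (bloch T k)) / (2 * pi * \<i>)"

end

theory Submission
  imports Defs
begin

(* Since M is orthogonal, det M = +-1, so the inversion symmetry M X(-k) M^T = X(k) makes
   det X an even function of k. The derivative of an even differentiable function is odd, so
   the integrand (det X)' / det X of the winding number is odd and integrates to zero over
   [-pi, pi]. Differentiability of det X comes from locality: the exponential decay of T makes
   each entry of X the sum of two power series in e^(-ik) and e^(ik) whose radius of
   convergence e^(1/L) exceeds 1. *)

lemma has_sum_sum: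
  fixes f :: "'i \<Rightarrow> 'a \<Rightarrow> 'b::topological_comm_monoid_add"
  assumes "finite I" and "\<And>i. i \<in> I \<Longrightarrow> (f i has_sum s i) A"
  shows "((\<lambda>x. \<Sum>i\<in>I. f i x) has_sum (\<Sum>i\<in>I. s i)) A"
  using assms by (induction I rule: finite_induct) (auto intro: has_sum_add)

lemma summable_on_mult_norm_le_one:
  fixes f g :: "'a \<Rightarrow> complex"
  assumes "f summable_on A" and "\<And>x. x \<in> A \<Longrightarrow> norm (g x) \<le> 1"
  shows "(\<lambda>x. f x * g x) summable_on A"
proof -
  have "(\<lambda>x. norm (f x)) summable_on A"
    using assms(1) summable_on_iff_abs_summable_on_complex by blast
  then have "(\<lambda>x. norm (f x * g x)) summable_on A"
  proof (rule Infinite_Sum.abs_summable_on_comparison_test)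
    fix x assume "x \<in> A"
    then show "norm (f x * g x) \<le> norm (f x)"
      using assms(2) by (simp add: norm_mult mult_left_le)
  qed
  then show ?thesis
    using summable_on_iff_abs_summable_on_complex by blast
qed

lemma sums_of_has_sum_range:
  fixes f :: "'a \<Rightarrow> 'b::banach" and h :: "nat \<Rightarrow> 'a"
  assumes "f summable_on UNIV" and "inj h"
  shows "(\<lambda>n. f (h n)) sums infsum f (range h)"
proof -
  have "f summable_on range h"
    using assms(1) by (rule summable_on_subset_banach) simp
  then have "(f has_sum infsum f (range h)) (range h)"
    by simp
  then have "((f \<circ> h) has_sum infsum f (range h)) UNIV"
    using has_sum_reindex[OF assms(2)] by blast
  then show ?thesis
    by (simp add: has_sum_imp_sums o_def)
qed

lemma infsum_int_eq_suminf:
  fixes f :: "int \<Rightarrow> 'a::banach"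
  assumes "f summable_on UNIV"
  shows "infsum f UNIV = (\<Sum>n. f (int n)) + (\<Sum>n. f (- int n)) - f 0"
proof -
  let ?N = "range (\<lambda>n. - int n)"
  have pos: "(\<lambda>n. f (int n)) sums infsum f (range int)"
    by (rule sums_of_has_sum_range[OF assms]) simp
  have neg: "(\<lambda>n. f (- int n)) sums infsum f ?N"
    by (rule sums_of_has_sum_range[OF assms]) (simp add: inj_def)
  have "(f has_sum (infsum f ?N - f 0)) (?N - {0})"
  proof (rule has_sum_Diff)
    show "(f has_sum infsum f ?N) ?N"
      using summable_on_subset_banach[OF assms, of ?N] by simp
    show "(f has_sum f 0) {0}"
      using has_sum_finite[of "{0}" f] by simp
  qed auto
  moreover have "(f has_sum infsum f (range int)) (range int)"
    using summable_on_subset_banach[OF assms, of "range int"] by simp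
  ultimately have "(f has_sum (infsum f (range int) + (infsum f ?N - f 0))) (range int \<union> (?N - {0}))"
    by (intro has_sum_Un_disjoint) auto
  moreover have "range int \<union> (?N - {0}) = UNIV"
  proof -
    have "x \<in> range int \<or> x \<in> ?N" for x :: int
    proof (cases "x \<ge> 0")
      case True
      then have "x = int (nat x)" by simp
      then show ?thesis by blast
    next
      case False
      then have "x = - int (nat (- x))" by simp
      then show ?thesis by blast
    qed
    then show ?thesis by auto
  qed
  ultimately show ?thesis
    using sums_unique[OF pos] sums_unique[OF neg] infsumI by fastforce
qed

lemma summable_exp_decay_times_power:
  fixes s :: "nat \<Rightarrow> 'a::{real_normed_field,banach}"
  assumes "0 < L" and decay: "\<And>n. N \<le> n \<Longrightarrow> norm (s n) \<le> C * exp (- real n / L)"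
  shows "summable (\<lambda>n. s n * of_real (exp (1 / (2 * L))) ^ n)"
proof (rule summable_comparison_test')
  show "summable (\<lambda>n. C * exp (- 1 / (2 * L)) ^ n)"
    using \<open>0 < L\<close> by (intro summable_mult summable_geometric) simp
next
  fix n assume "N \<le> n"
  have "norm (s n * of_real (exp (1 / (2 * L))) ^ n) = norm (s n) * exp (real n / (2 * L))"
    by (simp add: norm_mult norm_power flip: exp_of_nat_mult)
  also have "\<dots> \<le> C * exp (- real n / L) * exp (real n / (2 * L))"
    using decay[OF \<open>N \<le> n\<close>] by (rule mult_right_mono) simp
  also have "\<dots> = C * exp (- 1 / (2 * L)) ^ n"
    using \<open>0 < L\<close> by (simp add: mult.assoc field_simps flip: exp_add exp_of_nat_mult)
  finally show "norm (s n * of_real (exp (1 / (2 * L))) ^ n) \<le> C * exp (- 1 / (2 * L)) ^ n" .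
qed

lemma differentiable_at_of_real_compose:
  assumes "f field_differentiable at (complex_of_real x)"
  shows "(\<lambda>t. f (complex_of_real t)) differentiable at x"
proof -
  have "complex_of_real differentiable at x"
    by (rule bounded_linear_imp_differentiable[OF bounded_linear_of_real])
  then have "(f \<circ> complex_of_real) differentiable at x"
    by (rule differentiable_chain_at) (use assms field_differentiable_imp_differentiable in blast)
  then show ?thesis
    by (simp add: o_def)
qed

lemma power_series_exp_field_differentiable:
  fixes c :: "nat \<Rightarrow> complex"
  assumes "summable (\<lambda>n. c n * K ^ n)" and "norm (exp (u * z)) < norm K"
  shows "(\<lambda>w. \<Sum>n. c n * exp (u * w) ^ n) field_differentiable at z"
proof -
  have "(\<lambda>v. \<Sum>n. c n * v ^ n) field_differentiable at (exp (u * z))"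
    using termdiffs_strong[OF assms] unfolding field_differentiable_def by force
  moreover have "(\<lambda>w. exp (u * w)) field_differentiable at z"
    using field_differentiable_compose[of "\<lambda>w. u * w" z exp] field_differentiable_within_exp
    by (auto simp: o_def intro: derivative_intros)
  ultimately have "((\<lambda>v. \<Sum>n. c n * v ^ n) \<circ> (\<lambda>w. exp (u * w))) field_differentiable at z"
    by (intro field_differentiable_compose)
  then show ?thesis
    by (simp add: o_def)
qed

lemma fourier_series_differentiable:
  fixes c :: "int \<Rightarrow> complex" and K :: complex
  assumes "c summable_on UNIV" and "1 < norm K"
    and "summable (\<lambda>n. c (int n) * K ^ n)" and "summable (\<lambda>n. c (- int n) * K ^ n)"
  shows "(\<lambda>q. \<Sum>\<^sub>\<infinity>l. c l * exp (- \<i> * of_real (q * of_int l))) differentiable at k"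
proof -
  define H where "H w = (\<Sum>n. c (int n) * exp (- \<i> * w) ^ n) + (\<Sum>n. c (- int n) * exp (\<i> * w) ^ n) - c 0"
    for w
  have "(\<lambda>w. \<Sum>n. c (int n) * exp (- \<i> * w) ^ n) field_differentiable at (of_real k)"
    by (rule power_series_exp_field_differentiable[OF assms(3)]) (simp add: norm_exp_eq_Re assms(2))
  moreover have "(\<lambda>w. \<Sum>n. c (- int n) * exp (\<i> * w) ^ n) field_differentiable at (of_real k)"
    by (rule power_series_exp_field_differentiable[OF assms(4)]) (simp add: norm_exp_eq_Re assms(2))
  ultimately have "H field_differentiable at (of_real k)"
    unfolding H_def by (intro field_differentiable_diff field_differentiable_add field_differentiable_const)
  moreover have "(\<Sum>\<^sub>\<infinity>l. c l * exp (- \<i> * of_real (q * of_int l))) = H (of_real q)" for q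
  proof -
    have "(\<lambda>l. c l * exp (- \<i> * of_real (q * of_int l))) summable_on UNIV"
      by (rule summable_on_mult_norm_le_one[OF assms(1)]) (simp add: norm_exp_eq_Re)
    moreover have "exp (- \<i> * of_real (q * of_int (int n))) = exp (- \<i> * of_real q) ^ n"
      and "exp (- \<i> * of_real (q * of_int (- int n))) = exp (\<i> * of_real q) ^ n" for n
      by (simp_all flip: exp_of_nat_mult add: mult_ac)
    ultimately show ?thesis
      by (simp add: infsum_int_eq_suminf H_def)
  qed
  ultimately show ?thesis
    by (simp add: differentiable_at_of_real_compose)
qed

lemma differentiable_prod:
  fixes f :: "'i \<Rightarrow> 'a::real_normed_vector \<Rightarrow> 'b::{real_normed_algebra,comm_ring_1}"
  assumes "\<And>i. i \<in> I \<Longrightarrow> f i differentiable (at x within S)"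
  shows "(\<lambda>x. \<Prod>i\<in>I. f i x) differentiable (at x within S)"
  using assms
proof (induction I rule: infinite_finite_induct)
  case (insert i I)
  then show ?case
    by (simp add: differentiable_mult)
qed simp_all

lemma differentiable_det:
  fixes A :: "'a::real_normed_vector \<Rightarrow> 'b::{real_normed_algebra,comm_ring_1} ^ 'n ^ 'n"
  assumes "\<And>i j. (\<lambda>x. A x $ i $ j) differentiable (at x within S)"
  shows "(\<lambda>x. det (A x)) differentiable (at x within S)"
  unfolding det_def
  by (intro differentiable_sum differentiable_mult differentiable_const differentiable_prod ballI assms)
     simp

lemma vector_derivative_even:
  fixes F :: "real \<Rightarrow> 'a::real_normed_vector"
  assumes even: "\<And>y. F (- y) = F y" and "F differentiable at x"
  shows "vector_derivative F (at (- x)) = - vector_derivative F (at x)"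
proof -
  have "(F has_vector_derivative vector_derivative F (at x)) (at x)"
    using assms(2) vector_derivative_works by blast
  then have "((F \<circ> uminus) has_vector_derivative (- 1) *\<^sub>R vector_derivative F (at x)) (at (- x))"
    by (intro vector_diff_chain_at) (auto intro!: derivative_eq_intros)
  moreover have "F \<circ> uminus = F"
    using even by (simp add: fun_eq_iff)
  ultimately show ?thesis
    by (simp add: vector_derivative_at)
qed

lemma integral_odd_function:
  fixes g :: "real \<Rightarrow> 'a::real_normed_vector"
  assumes "\<And>x. g (- x) = - g x"
  shows "integral {- a..a} g = 0"
proof -
  have "integral {- a..a} g = integral {- a..a} (\<lambda>x. g (- x))"
    using Henstock_Kurzweil_Integration.integral_reflect_real[of a "- a" g] by simp
  also have "\<dots> = - integral {- a..a} g"
    by (simp add: assms)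
  finally show ?thesis
    by (metis eq_neg_iff_add_eq_0 scaleR_2 scaleR_eq_0_iff zero_neq_numeral)
qed

lemma det_map_matrix_of_real:
  "det (map_matrix of_real A) = (of_real (det A) :: 'a::{real_algebra_1,comm_ring_1})"
  by (simp add: det_def of_real_sum of_real_prod)

lemma det_orthogonal_congruence:
  fixes A :: "'a::{real_algebra_1,comm_ring_1} ^ 'n ^ 'n"
  assumes "orthogonal_matrix M"
  shows "det (map_matrix of_real M ** A ** transpose (map_matrix of_real M)) = det A"
proof -
  have "det M * det M = 1"
    using det_orthogonal_matrix[OF assms] by auto
  then have "(of_real (det M) :: 'a) * of_real (det M) = 1"
    by (metis of_real_1 of_real_mult)
  then show ?thesis
    by (simp add: det_mul det_map_matrix_of_real mult.commute mult.left_commute)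
qed

lemma stochastic_nonneg: "stochastic T \<Longrightarrow> 0 \<le> T i a j b"
  unfolding stochastic_def by blast

lemma stochastic_column_summable:
  assumes "stochastic T"
  shows "(\<lambda>l. T l a j b) summable_on UNIV"
proof -
  have "(\<lambda>(i, a). T i a j b) summable_on UNIV"
    using assms unfolding stochastic_def by (meson has_sum_imp_summable)
  then have "(\<lambda>(i, a). T i a j b) summable_on range (\<lambda>i. (i, a))"
    by (rule summable_on_subset_banach) simp
  then show ?thesis
    by (subst (asm) summable_on_reindex) (auto simp: inj_on_def o_def)
qed

lemma bloch_entry_has_sum:
  assumes "stochastic T"
  shows "((\<lambda>l. complex_of_real (T l a 0 b) * exp (- \<i> * of_real (k * of_int l))) has_sum bloch T k $ a $ b) UNIV"
proof -
  have "(\<lambda>l. complex_of_real (T l a 0 b) * exp (- \<i> * of_real (k * of_int l))) summable_on UNIV"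
    by (intro summable_on_mult_norm_le_one summable_on_of_real stochastic_column_summable[OF assms])
       (simp add: norm_exp_eq_Re)
  then show ?thesis
    by (simp add: bloch_def)
qed

lemma bloch_reflected_has_sum:
  assumes "stochastic T"
  shows "((\<lambda>l. complex_of_real (T (- l) a 0 b) * exp (- \<i> * of_real (k * of_int l))) has_sum bloch T (- k) $ a $ b) UNIV"
proof -
  let ?f = "\<lambda>l. complex_of_real (T l a 0 b) * exp (- \<i> * of_real (- k * of_int l))"
  have "bij_betw uminus (UNIV :: int set) UNIV"
    by (rule bij_betwI[of _ _ _ uminus]) auto
  then have "((\<lambda>l. ?f (- l)) has_sum bloch T (- k) $ a $ b) UNIV \<longleftrightarrow> (?f has_sum bloch T (- k) $ a $ b) UNIV"
    by (rule has_sum_reindex_bij_betw)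
  then have "((\<lambda>l. ?f (- l)) has_sum bloch T (- k) $ a $ b) UNIV"
    using bloch_entry_has_sum[OF assms, of a b "- k"] by blast
  then show ?thesis
    by simp
qed

lemma bloch_reflected_combination_has_sum:
  fixes w :: "'d::finite \<Rightarrow> 'd \<Rightarrow> complex"
  assumes "stochastic T"
  shows "((\<lambda>l. \<Sum>b\<in>UNIV. \<Sum>c\<in>UNIV. w b c * (of_real (T (- l) b 0 c) * exp (- \<i> * of_real (k * of_int l))))
      has_sum (\<Sum>b\<in>UNIV. \<Sum>c\<in>UNIV. w b c * bloch T (- k) $ b $ c)) UNIV"
proof -
  have "((\<lambda>l. \<Sum>c\<in>UNIV. w b c * (of_real (T (- l) b 0 c) * exp (- \<i> * of_real (k * of_int l))))
      has_sum (\<Sum>c\<in>UNIV. w b c * bloch T (- k) $ b $ c)) UNIV" for b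
    by (rule has_sum_sum)
       (simp_all only: finite_class.finite_UNIV has_sum_cmult_right bloch_reflected_has_sum[OF assms])
  then show ?thesis
    by (rule has_sum_sum[OF finite_class.finite_UNIV])
qed

lemma bloch_inversion:
  fixes T :: "int \<Rightarrow> 'd::finite \<Rightarrow> int \<Rightarrow> 'd \<Rightarrow> real" and M :: "real ^ 'd ^ 'd"
  assumes "stochastic T"
    and inversion: "\<forall>l j a d. (\<Sum>b\<in>UNIV. \<Sum>c\<in>UNIV. M $ a $ b * T (j - l) b j c * M $ d $ c) = T (j + l) a j d"
  shows "bloch T k = map_matrix of_real M ** bloch T (- k) ** transpose (map_matrix of_real M)"
proof -
  have "bloch T k $ a $ d = (map_matrix of_real M ** bloch T (- k) ** transpose (map_matrix of_real M)) $ a $ d"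
    for a d
  proof -
    let ?E = "\<lambda>l. exp (- \<i> * of_real (k * of_int l))"
    let ?w = "\<lambda>b c. complex_of_real (M $ a $ b * M $ d $ c)"
    have "(\<Sum>b\<in>UNIV. \<Sum>c\<in>UNIV. ?w b c * (of_real (T (- l) b 0 c) * ?E l)) = of_real (T l a 0 d) * ?E l"
      for l
    proof -
      have "T l a 0 d = (\<Sum>b\<in>UNIV. \<Sum>c\<in>UNIV. M $ a $ b * T (- l) b 0 c * M $ d $ c)"
        using inversion[rule_format, where l = l and j = 0] by simp
      then show ?thesis
        by (simp add: sum_distrib_left mult_ac)
    qed
    then have "((\<lambda>l. of_real (T l a 0 d) * ?E l) has_sum (\<Sum>b\<in>UNIV. \<Sum>c\<in>UNIV. ?w b c * bloch T (- k) $ b $ c)) UNIV"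
      using bloch_reflected_combination_has_sum[OF assms(1), of ?w k] by (simp only:)
    then have "bloch T k $ a $ d = (\<Sum>b\<in>UNIV. \<Sum>c\<in>UNIV. ?w b c * bloch T (- k) $ b $ c)"
      using bloch_entry_has_sum[OF assms(1)] has_sum_unique by blast
    also have "\<dots> = (map_matrix of_real M ** bloch T (- k) ** transpose (map_matrix of_real M)) $ a $ d"
      by (simp add: matrix_matrix_mult_def transpose_def sum_distrib_left sum_distrib_right mult_ac)
         (rule sum.swap)
    finally show ?thesis .
  qed
  then show ?thesis
    by (simp add: vec_eq_iff)
qed

lemma det_bloch_even:
  fixes T :: "int \<Rightarrow> 'd::finite \<Rightarrow> int \<Rightarrow> 'd \<Rightarrow> real" and M :: "real ^ 'd ^ 'd"
  assumes "stochastic T" and "orthogonal_matrix M"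
    and "\<forall>l j a d. (\<Sum>b\<in>UNIV. \<Sum>c\<in>UNIV. M $ a $ b * T (j - l) b j c * M $ d $ c) = T (j + l) a j d"
  shows "det (bloch T (- k)) = det (bloch T k)"
proof -
  have "det (bloch T k) = det (map_matrix of_real M ** bloch T (- k) ** transpose (map_matrix of_real M))"
    using bloch_inversion[OF assms(1,3), of k] by (rule arg_cong)
  also have "\<dots> = det (bloch T (- k))"
    by (rule det_orthogonal_congruence[OF assms(2)])
  finally show ?thesis ..
qed

lemma bloch_entry_differentiable:
  assumes "stochastic T" and "local_matrix T"
  shows "(\<lambda>q. bloch T q $ a $ b) differentiable at k"
proof -
  obtain C L N where "0 < L" and decay: "\<And>l. N \<le> \<bar>l\<bar> \<Longrightarrow> T l a 0 b \<le> C * exp (- real_of_int \<bar>l\<bar> / L)"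
    using assms(2) unfolding local_matrix_def by (metis diff_zero)
  let ?c = "\<lambda>l. complex_of_real (T l a 0 b)"
  let ?K = "complex_of_real (exp (1 / (2 * L)))"
  have "norm (?c (s * int n)) \<le> C * exp (- real n / L)" if "\<bar>s\<bar> = 1" "nat N \<le> n" for s n
  proof -
    have "\<bar>s * int n\<bar> = int n"
      using that(1) by (simp add: abs_mult)
    then show ?thesis
      using decay[of "s * int n"] that(2) stochastic_nonneg[OF assms(1)] by auto
  qed
  from this[of 1] this[of "-1"]
  have "summable (\<lambda>n. ?c (int n) * ?K ^ n)" and "summable (\<lambda>n. ?c (- int n) * ?K ^ n)"
    by (auto intro!: summable_exp_decay_times_power[OF \<open>0 < L\<close>, of "nat N"])
  moreover have "?c summable_on UNIV"
    by (intro summable_on_of_real stochastic_column_summable[OF assms(1)])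
  moreover have "1 < norm ?K"
    using \<open>0 < L\<close> by simp
  ultimately have "(\<lambda>q. \<Sum>\<^sub>\<infinity>l. ?c l * exp (- \<i> * of_real (q * of_int l))) differentiable at k"
    using fourier_series_differentiable by blast
  then show ?thesis
    by (simp add: bloch_def)
qed

theorem mainTheorem7:
  fixes T :: "int \<Rightarrow> 'd::finite \<Rightarrow> int \<Rightarrow> 'd \<Rightarrow> real"
    and M :: "real ^ 'd ^ 'd"
  assumes "stochastic T" and "local_matrix T" and "translation_invariant T"
    and "\<forall>k \<in> {-pi..pi}. det (bloch T k) \<noteq> 0"
    and "orthogonal_matrix M"
    and "\<forall>l j a d. (\<Sum>b\<in>UNIV. \<Sum>c\<in>UNIV. M $ a $ b * T (j - l) b j c * M $ d $ c) = T (j + l) a j d"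
  shows "wind T = 0"
proof -
  define F where "F q = det (bloch T q)" for q
  have F_even: "F (- q) = F q" for q
    unfolding F_def by (rule det_bloch_even[OF assms(1,5,6)])
  have "F differentiable at q" for q
    unfolding F_def by (intro differentiable_det bloch_entry_differentiable[OF assms(1,2)])
  then have "vector_derivative F (at (- q)) / F (- q) = - (vector_derivative F (at q) / F q)" for q
    by (simp add: vector_derivative_even F_even)
  then have "integral {- pi..pi} (\<lambda>q. vector_derivative F (at q) / F q) = 0"
    by (rule integral_odd_function)
  then show ?thesis
    unfolding wind_def F_def by simp
qed

end
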